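(* Let $0\le a\le b\le1$, and in $l_\infty^2$ let $H_1=\{(\xi_1,\xi_2):\xi_2\ge -a\xi_1\}$ and $H_2=\{(\xi_1,\xi_2):\xi_2\le b\xi_1\}$ with the restricted metrics. Let $X$ be the gluing of $H_1$ and $H_2$ along $\mathbb{R}$ via the isometries $\xi\mapsto(\xi,-a\xi)\in H_1$ and $\xi\mapsto(\xi,b\xi)\in H_2$ (i.e. identifying $(\xi,-a\xi)$ with $(\xi,b\xi)$). Then $X$ is hyperconvex if and only if $a=b=0$ or $a=b=1$.
   Context: $l_\infty^2$ is $\mathbb{R}^2$ with the metric $d((\xi_1,\xi_2),(\eta_1,\eta_2))=\max(|\xi_1-\eta_1|,|\xi_2-\eta_2|)$. A metric space is hyperconvex if every collection of closed balls $\{B(x_i,r_i)\}$ with $d(x_i,x_j)\le r_i+r_j$ has non-empty intersection. The gluing of $X_1,X_2$ along $A$ via isometric embeddings $\varphi_k\colon A\to X_k$ with closed images is $X_1\sqcup X_2/(\varphi_1(a)\sim\varphi_2(a))$ with metric $d_k$ on $X_k$ and $d(x,y)=\inf_{a\in A}\{d_1(x,\varphi_1(a))+d_2(\varphi_2(a),y)\}$ for $x\in X_1,y\in X_2$. *)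

theory Defs
  imports Complex_Main
begin

definition hyperconvex :: "'a set \<Rightarrow> ('a \<Rightarrow> 'a \<Rightarrow> real) \<Rightarrow> bool" where
  "hyperconvex S d \<longleftrightarrow>
     (\<forall>F \<subseteq> S \<times> (UNIV :: real set).
        (\<forall>(x, r) \<in> F. \<forall>(y, s) \<in> F. d x y \<le> r + s) \<longrightarrow>
        (\<exists>z \<in> S. \<forall>(x, r) \<in> F. d x z \<le> r))"

definition linf_dist :: "real \<times> real \<Rightarrow> real \<times> real \<Rightarrow> real" where
  "linf_dist p q = max \<bar>fst p - fst q\<bar> \<bar>snd p - snd q\<bar>"

definition glue_carrier :: "'a set \<Rightarrow> 'b set \<Rightarrow> ('a + 'b) set" where
  "glue_carrier X1 X2 = Inl ` X1 \<union> Inr ` X2"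

fun glue_pdist :: "('a \<Rightarrow> 'a \<Rightarrow> real) \<Rightarrow> ('b \<Rightarrow> 'b \<Rightarrow> real) \<Rightarrow> 'c set \<Rightarrow>
    ('c \<Rightarrow> 'a) \<Rightarrow> ('c \<Rightarrow> 'b) \<Rightarrow> ('a + 'b) \<Rightarrow> ('a + 'b) \<Rightarrow> real" where
  "glue_pdist d1 d2 A \<phi>1 \<phi>2 (Inl x) (Inl y) = d1 x y"
| "glue_pdist d1 d2 A \<phi>1 \<phi>2 (Inr x) (Inr y) = d2 x y"
| "glue_pdist d1 d2 A \<phi>1 \<phi>2 (Inl x) (Inr y) = (INF a\<in>A. d1 x (\<phi>1 a) + d2 (\<phi>2 a) y)"
| "glue_pdist d1 d2 A \<phi>1 \<phi>2 (Inr y) (Inl x) = (INF a\<in>A. d1 x (\<phi>1 a) + d2 (\<phi>2 a) y)"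

definition glue_rel :: "'a set \<Rightarrow> 'b set \<Rightarrow> 'c set \<Rightarrow> ('c \<Rightarrow> 'a) \<Rightarrow> ('c \<Rightarrow> 'b) \<Rightarrow>
    (('a + 'b) \<times> ('a + 'b)) set" where
  "glue_rel X1 X2 A \<phi>1 \<phi>2 =
     {(u, v). u \<in> glue_carrier X1 X2 \<and> v \<in> glue_carrier X1 X2 \<and>
        (u = v \<or> (\<exists>a\<in>A. u = Inl (\<phi>1 a) \<and> v = Inr (\<phi>2 a))
               \<or> (\<exists>a\<in>A. u = Inr (\<phi>2 a) \<and> v = Inl (\<phi>1 a)))}"

definition glue_space :: "'a set \<Rightarrow> 'b set \<Rightarrow> 'c set \<Rightarrow> ('c \<Rightarrow> 'a) \<Rightarrow> ('c \<Rightarrow> 'b) \<Rightarrow>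
    ('a + 'b) set set" where
  "glue_space X1 X2 A \<phi>1 \<phi>2 = glue_carrier X1 X2 // glue_rel X1 X2 A \<phi>1 \<phi>2"

definition glue_dist :: "('a \<Rightarrow> 'a \<Rightarrow> real) \<Rightarrow> ('b \<Rightarrow> 'b \<Rightarrow> real) \<Rightarrow> 'c set \<Rightarrow>
    ('c \<Rightarrow> 'a) \<Rightarrow> ('c \<Rightarrow> 'b) \<Rightarrow> ('a + 'b) set \<Rightarrow> ('a + 'b) set \<Rightarrow> real" where
  "glue_dist d1 d2 A \<phi>1 \<phi>2 P Q =
     glue_pdist d1 d2 A \<phi>1 \<phi>2 (SOME p. p \<in> P) (SOME q. q \<in> Q)"

end

theory Submission
  imports Defs
begin

text \<open>For \<open>a = b = 0\<close> and \<open>a = b = 1\<close> the glued space is isometric to the whole \<open>l\<^sub>\<infinity>\<^sup>2\<close>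
  plane (via the identity, resp. a quarter turn of \<open>H\<^sub>2\<close>), which is hyperconvex because balls
  of the sup metric are products of intervals and pairwise intersecting intervals have a common
  point. In every other case three pairwise touching balls have empty intersection; the
  intersection is ruled out by linear functionals that agree on the two copies of the seam and
  are therefore Lipschitz for the glued distance.\<close>

lemma linf_dist_commute: "linf_dist x y = linf_dist y x"
  unfolding linf_dist_def by (simp add: abs_minus_commute)

lemma linf_dist_triangle: "linf_dist x z \<le> linf_dist x y + linf_dist y z"
  unfolding linf_dist_def by (simp add: max_def) linarith

lemma linf_dist_nonneg: "0 \<le> linf_dist x y"
  unfolding linf_dist_def by simp

lemma linf_dist_self [simp]: "linf_dist x x = 0"
  unfolding linf_dist_def by simp

lemma linf_dist_le_iff: "linf_dist x y \<le> r \<longleftrightarrow> \<bar>fst x - fst y\<bar> \<le> r \<and> \<bar>snd x - snd y\<bar> \<le> r"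
  unfolding linf_dist_def by simp

lemma linf_dist_on_line:
  assumes "\<bar>m\<bar> \<le> 1"
  shows "linf_dist (c, m * c) (e, m * e) = \<bar>c - e\<bar>"
proof -
  have "\<bar>m * c - m * e\<bar> = \<bar>m\<bar> * \<bar>c - e\<bar>"
    by (simp add: abs_mult flip: right_diff_distrib)
  also have "\<dots> \<le> \<bar>c - e\<bar>"
    using assms by (simp add: mult_left_le_one_le)
  finally show ?thesis
    unfolding linf_dist_def by simp
qed

lemma linear_le_max_abs:
  fixes \<alpha> \<gamma> u v :: real
  assumes "\<bar>\<alpha>\<bar> + \<bar>\<gamma>\<bar> \<le> k"
  shows "\<alpha> * u + \<gamma> * v \<le> k * max \<bar>u\<bar> \<bar>v\<bar>"
proof -
  have "\<alpha> * u + \<gamma> * v \<le> \<bar>\<alpha>\<bar> * \<bar>u\<bar> + \<bar>\<gamma>\<bar> * \<bar>v\<bar>"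
    by (intro add_mono) (simp_all flip: abs_mult)
  also have "\<dots> \<le> \<bar>\<alpha>\<bar> * max \<bar>u\<bar> \<bar>v\<bar> + \<bar>\<gamma>\<bar> * max \<bar>u\<bar> \<bar>v\<bar>"
    by (intro add_mono mult_left_mono) auto
  also have "\<dots> \<le> k * max \<bar>u\<bar> \<bar>v\<bar>"
    using assms by (simp flip: distrib_right) (intro mult_right_mono, auto)
  finally show ?thesis .
qed

lemma common_point_of_intervals:
  fixes c r :: "'i \<Rightarrow> real"
  assumes "I \<noteq> {}" and "\<And>i j. i \<in> I \<Longrightarrow> j \<in> I \<Longrightarrow> c i - r i \<le> c j + r j"
  shows "\<exists>t. \<forall>i\<in>I. \<bar>c i - t\<bar> \<le> r i"
proof (intro exI ballI)
  fix i assume i: "i \<in> I"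
  let ?t = "SUP j\<in>I. c j - r j"
  have "bdd_above ((\<lambda>j. c j - r j) ` I)"
    using assms(2) i by (auto intro!: bdd_aboveI2)
  then have "c i - r i \<le> ?t"
    using i by (rule cSUP_upper2) simp
  moreover have "?t \<le> c i + r i"
    using assms i by (intro cSUP_least) auto
  ultimately show "\<bar>c i - ?t\<bar> \<le> r i"
    by linarith
qed

lemma hyperconvex_linf_plane: "hyperconvex UNIV linf_dist"
  unfolding hyperconvex_def
proof (intro allI impI)
  fix F :: "((real \<times> real) \<times> real) set"
  assume "\<forall>(x, r)\<in>F. \<forall>(y, s)\<in>F. linf_dist x y \<le> r + s"
  then have pairwise: "\<And>p q. p \<in> F \<Longrightarrow> q \<in> F \<Longrightarrow>
      \<bar>fst (fst p) - fst (fst q)\<bar> \<le> snd p + snd q \<and> \<bar>snd (fst p) - snd (fst q)\<bar> \<le> snd p + snd q"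
    by (fastforce simp: linf_dist_le_iff)
  show "\<exists>z\<in>UNIV. \<forall>(x, r)\<in>F. linf_dist x z \<le> r"
  proof (cases "F = {}")
    case False
    obtain t1 where t1: "\<forall>p\<in>F. \<bar>fst (fst p) - t1\<bar> \<le> snd p"
      using common_point_of_intervals[OF False, of "\<lambda>p. fst (fst p)" snd] pairwise
      by (force simp: abs_le_iff)
    obtain t2 where t2: "\<forall>p\<in>F. \<bar>snd (fst p) - t2\<bar> \<le> snd p"
      using common_point_of_intervals[OF False, of "\<lambda>p. snd (fst p)" snd] pairwise
      by (force simp: abs_le_iff)
    show ?thesis
      using t1 t2 by (intro bexI[of _ "(t1, t2)"]) (auto simp: linf_dist_le_iff)
  qed simp
qed

lemma hyperconvex_distance_preserving_image:
  assumes hC: "hyperconvex C dC" and surj: "E ` C = S"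
    and dist: "\<And>u v. u \<in> C \<Longrightarrow> v \<in> C \<Longrightarrow> dC u v = dS (E u) (E v)"
  shows "hyperconvex S dS"
  unfolding hyperconvex_def
proof (intro allI impI)
  fix F assume FS: "F \<subseteq> S \<times> UNIV" and pw: "\<forall>(x, r)\<in>F. \<forall>(y, s)\<in>F. dS x y \<le> r + s"
  define F' where "F' = {(u, r). u \<in> C \<and> (E u, r) \<in> F}"
  have "F' \<subseteq> C \<times> UNIV"
    unfolding F'_def by auto
  moreover have "\<forall>(x, r)\<in>F'. \<forall>(y, s)\<in>F'. dC x y \<le> r + s"
    using pw dist unfolding F'_def by fastforce
  ultimately obtain z where z: "z \<in> C" "\<forall>(x, r)\<in>F'. dC x z \<le> r"
    using hC unfolding hyperconvex_def by blast
  have "dS x (E z) \<le> r" if xr: "(x, r) \<in> F" for x r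
  proof -
    obtain u where "u \<in> C" "x = E u"
      using xr FS surj by blast
    with xr z dist show ?thesis
      unfolding F'_def by auto
  qed
  with z surj show "\<exists>z\<in>S. \<forall>(x, r)\<in>F. dS x z \<le> r"
    by blast
qed

lemma hyperconvex_distance_preserving_preimage:
  assumes hS: "hyperconvex S dS" and surj: "E ` C = S"
    and dist: "\<And>u v. u \<in> C \<Longrightarrow> v \<in> C \<Longrightarrow> dC u v = dS (E u) (E v)"
  shows "hyperconvex C dC"
  unfolding hyperconvex_def
proof (intro allI impI)
  fix F assume FC: "F \<subseteq> C \<times> UNIV" and pw: "\<forall>(x, r)\<in>F. \<forall>(y, s)\<in>F. dC x y \<le> r + s"
  define F' where "F' = (\<lambda>(u, r). (E u, r)) ` F"
  have "F' \<subseteq> S \<times> UNIV"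
    using FC surj unfolding F'_def by auto
  moreover have "\<forall>(x, r)\<in>F'. \<forall>(y, s)\<in>F'. dS x y \<le> r + s"
    using pw dist FC unfolding F'_def by fastforce
  ultimately obtain Z where Z: "Z \<in> S" "\<forall>(x, r)\<in>F'. dS x Z \<le> r"
    using hS unfolding hyperconvex_def by blast
  then obtain z where z: "z \<in> C" "Z = E z"
    using surj by blast
  have "dC u z \<le> r" if "(u, r) \<in> F" for u r
    using that FC Z z dist unfolding F'_def by fastforce
  with z show "\<exists>z\<in>C. \<forall>(x, r)\<in>F. dC x z \<le> r"
    by blast
qed

lemma hyperconvex_iff_distance_preserving_surj:
  assumes "E ` C = S" and "\<And>u v. u \<in> C \<Longrightarrow> v \<in> C \<Longrightarrow> dC u v = dS (E u) (E v)"
  shows "hyperconvex C dC \<longleftrightarrow> hyperconvex S dS"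
  using hyperconvex_distance_preserving_image hyperconvex_distance_preserving_preimage assms by metis

lemma hyperconvexE_three_balls:
  assumes "hyperconvex S d" and "x1 \<in> S" "x2 \<in> S" "x3 \<in> S"
    and "\<And>x y. d x y = d y x" and "\<And>x. d x x = 0"
    and "0 \<le> r1" "0 \<le> r2" "0 \<le> r3"
    and "d x1 x2 \<le> r1 + r2" "d x1 x3 \<le> r1 + r3" "d x2 x3 \<le> r2 + r3"
  obtains z where "z \<in> S" "d x1 z \<le> r1" "d x2 z \<le> r2" "d x3 z \<le> r3"
proof -
  let ?F = "{(x1, r1), (x2, r2), (x3, r3)}"
  have "\<forall>(x, r)\<in>?F. \<forall>(y, s)\<in>?F. d x y \<le> r + s"
    using assms(6-) assms(5)[of x1 x2] assms(5)[of x1 x3] assms(5)[of x2 x3]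
    by (auto simp: add.commute)
  moreover have "?F \<subseteq> S \<times> UNIV"
    using assms(2-4) by auto
  ultimately obtain z where "z \<in> S" "\<forall>(x, r)\<in>?F. d x z \<le> r"
    using assms(1) unfolding hyperconvex_def by meson
  then show thesis
    using that by simp
qed

lemma hyperconvex_glue_space_iff:
  fixes d1 :: "'a \<Rightarrow> 'a \<Rightarrow> real" and d2 :: "'b \<Rightarrow> 'b \<Rightarrow> real"
    and A :: "'c set" and \<phi>1 :: "'c \<Rightarrow> 'a" and \<phi>2 :: "'c \<Rightarrow> 'b"
    and X1 :: "'a set" and X2 :: "'b set"
  defines "pd \<equiv> glue_pdist d1 d2 A \<phi>1 \<phi>2" and "R \<equiv> glue_rel X1 X2 A \<phi>1 \<phi>2"
  assumes commute: "\<And>u v. pd u v = pd v u"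
    and respects: "\<And>u v w. (u, v) \<in> R \<Longrightarrow> pd v w = pd u w"
  shows "hyperconvex (glue_space X1 X2 A \<phi>1 \<phi>2) (glue_dist d1 d2 A \<phi>1 \<phi>2)
         \<longleftrightarrow> hyperconvex (glue_carrier X1 X2) pd"
proof -
  have refl: "(u, u) \<in> R" if "u \<in> glue_carrier X1 X2" for u
    using that unfolding R_def glue_rel_def by auto
  have "hyperconvex (glue_carrier X1 X2) pd \<longleftrightarrow>
      hyperconvex (glue_space X1 X2 A \<phi>1 \<phi>2) (glue_dist d1 d2 A \<phi>1 \<phi>2)"
  proof (rule hyperconvex_iff_distance_preserving_surj[where E = "\<lambda>u. R `` {u}"])
    show "(\<lambda>u. R `` {u}) ` glue_carrier X1 X2 = glue_space X1 X2 A \<phi>1 \<phi>2"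
      unfolding glue_space_def quotient_def R_def by auto
    fix u v assume u: "u \<in> glue_carrier X1 X2" and v: "v \<in> glue_carrier X1 X2"
    define p where "p = (SOME p. p \<in> R `` {u})"
    define q where "q = (SOME q. q \<in> R `` {v})"
    have "(u, p) \<in> R" and "(v, q) \<in> R"
      unfolding p_def q_def using someI[of "\<lambda>p. p \<in> R `` {_}"] refl u v by blast+
    then have "pd p q = pd u v"
      using commute respects by (metis (no_types))
    then show "pd u v = glue_dist d1 d2 A \<phi>1 \<phi>2 (R `` {u}) (R `` {v})"
      unfolding glue_dist_def pd_def[symmetric] p_def[symmetric] q_def[symmetric] by simp
  qed
  then show ?thesis
    by simp
qed

definition glued_pdist :: "real \<Rightarrow> real \<Rightarrow>
    (real \<times> real) + (real \<times> real) \<Rightarrow> (real \<times> real) + (real \<times> real) \<Rightarrow> real" where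
  "glued_pdist a b = glue_pdist linf_dist linf_dist UNIV (\<lambda>\<xi>. (\<xi>, - a * \<xi>)) (\<lambda>\<xi>. (\<xi>, b * \<xi>))"

lemma glued_pdist_Inl_Inl [simp]: "glued_pdist a b (Inl x) (Inl y) = linf_dist x y"
  and glued_pdist_Inr_Inr [simp]: "glued_pdist a b (Inr x) (Inr y) = linf_dist x y"
  and glued_pdist_Inl_Inr:
    "glued_pdist a b (Inl x) (Inr y) = (INF e. linf_dist x (e, - a * e) + linf_dist (e, b * e) y)"
  and glued_pdist_Inr_Inl: "glued_pdist a b (Inr y) (Inl x) = glued_pdist a b (Inl x) (Inr y)"
  by (simp_all add: glued_pdist_def)

lemma glued_pdist_commute: "glued_pdist a b u v = glued_pdist a b v u"
  by (cases u; cases v) (simp_all add: glued_pdist_Inr_Inl linf_dist_commute)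

lemma glued_pdist_self [simp]: "glued_pdist a b u u = 0"
  by (cases u) simp_all

lemma glued_pdist_le:
  "glued_pdist a b (Inl x) (Inr y) \<le> linf_dist x (e, - a * e) + linf_dist (e, b * e) y"
  unfolding glued_pdist_Inl_Inr
  by (rule cINF_lower) (auto intro!: bdd_belowI2[where m = 0] add_nonneg_nonneg linf_dist_nonneg)

lemma cINF_eq_attained:
  fixes m :: "'a :: conditionally_complete_lattice"
  assumes "\<And>e. m \<le> f e" and "f c = m"
  shows "(INF e. f e) = m"
  by (rule cInf_eq_minimum) (use assms in \<open>auto intro: sym\<close>)

text \<open>The last hypothesis says that the functionals \<open>(\<alpha>, \<gamma>)\<close> on \<open>H\<^sub>1\<close> and \<open>(\<alpha>', \<gamma>')\<close> on
  \<open>H\<^sub>2\<close> agree on the two copies of the seam, so together they are \<open>k\<close>-Lipschitz for the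
  glued distance.\<close>
lemma linear_le_glued_pdist:
  assumes "\<bar>\<alpha>\<bar> + \<bar>\<gamma>\<bar> \<le> k" "\<bar>\<alpha>'\<bar> + \<bar>\<gamma>'\<bar> \<le> k" "\<alpha> - a * \<gamma> = \<alpha>' + b * \<gamma>'"
  shows "\<alpha> * fst x + \<gamma> * snd x - (\<alpha>' * fst y + \<gamma>' * snd y) \<le> k * glued_pdist a b (Inl x) (Inr y)"
proof -
  have bound: "\<alpha> * fst x + \<gamma> * snd x - (\<alpha>' * fst y + \<gamma>' * snd y) \<le>
      k * (linf_dist x (e, - a * e) + linf_dist (e, b * e) y)" for e
  proof -
    have "\<alpha> * fst x + \<gamma> * snd x - (\<alpha>' * fst y + \<gamma>' * snd y) =
        (\<alpha> * (fst x - e) + \<gamma> * (snd x - - a * e)) + (\<alpha>' * (e - fst y) + \<gamma>' * (b * e - snd y))"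
      using assms(3) by (simp add: algebra_simps)
    also have "\<dots> \<le> k * linf_dist x (e, - a * e) + k * linf_dist (e, b * e) y"
      unfolding linf_dist_def fst_conv snd_conv by (intro add_mono linear_le_max_abs assms(1,2))
    finally show ?thesis
      by (simp add: distrib_left)
  qed
  moreover have "0 \<le> k"
    using assms(1) by linarith
  ultimately show ?thesis
  proof (cases "k = 0")
    case False
    with \<open>0 \<le> k\<close> have "0 < k"
      by simp
    have "(\<alpha> * fst x + \<gamma> * snd x - (\<alpha>' * fst y + \<gamma>' * snd y)) / k \<le> glued_pdist a b (Inl x) (Inr y)"
      unfolding glued_pdist_Inl_Inr
      using bound \<open>0 < k\<close> by (intro cINF_greatest) (auto simp: pos_divide_le_eq mult.commute)
    with \<open>0 < k\<close> show ?thesis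
      by (simp add: pos_divide_le_eq mult.commute)
  qed (use assms in auto)
qed

lemma glued_pdist_seam_Inl_Inr:
  assumes "\<bar>a\<bar> \<le> 1" "\<bar>b\<bar> \<le> 1"
  shows "glued_pdist a b (Inl (c, - a * c)) (Inr y) = linf_dist (c, b * c) y"
  unfolding glued_pdist_Inl_Inr
proof (rule cINF_eq_attained[where c = c])
  fix e
  have "linf_dist (c, b * c) y \<le> linf_dist (c, b * c) (e, b * e) + linf_dist (e, b * e) y"
    by (rule linf_dist_triangle)
  also have "linf_dist (c, b * c) (e, b * e) = linf_dist (c, - a * c) (e, - a * e)"
    using linf_dist_on_line assms by (metis abs_minus_cancel)
  finally show "linf_dist (c, b * c) y \<le> linf_dist (c, - a * c) (e, - a * e) + linf_dist (e, b * e) y" .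
qed simp

lemma glued_pdist_seam_Inr_Inl:
  assumes "\<bar>a\<bar> \<le> 1" "\<bar>b\<bar> \<le> 1"
  shows "glued_pdist a b (Inr (c, b * c)) (Inl x) = linf_dist x (c, - a * c)"
  unfolding glued_pdist_Inr_Inl glued_pdist_Inl_Inr
proof (rule cINF_eq_attained[where c = c])
  fix e
  have "linf_dist x (c, - a * c) \<le> linf_dist x (e, - a * e) + linf_dist (e, - a * e) (c, - a * c)"
    by (rule linf_dist_triangle)
  also have "linf_dist (e, - a * e) (c, - a * c) = linf_dist (e, b * e) (c, b * c)"
    using linf_dist_on_line assms by (metis abs_minus_cancel)
  finally show "linf_dist x (c, - a * c) \<le> linf_dist x (e, - a * e) + linf_dist (e, b * e) (c, b * c)" .
qed simp

lemma glued_pdist_seam: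
  assumes "\<bar>a\<bar> \<le> 1" "\<bar>b\<bar> \<le> 1"
  shows "glued_pdist a b (Inl (c, - a * c)) w = glued_pdist a b (Inr (c, b * c)) w"
  using glued_pdist_seam_Inl_Inr[OF assms] glued_pdist_seam_Inr_Inl[OF assms]
  by (cases w) (simp_all add: linf_dist_commute)

lemma glued_pdist_respects_glue_rel:
  assumes "\<bar>a\<bar> \<le> 1" "\<bar>b\<bar> \<le> 1"
    and "(u, v) \<in> glue_rel X1 X2 UNIV (\<lambda>\<xi>. (\<xi>, - a * \<xi>)) (\<lambda>\<xi>. (\<xi>, b * \<xi>))"
  shows "glued_pdist a b v w = glued_pdist a b u w"
  using assms(3) glued_pdist_seam[OF assms(1,2)] unfolding glue_rel_def by auto

lemma linf_dist_segment:
  fixes x w :: "real \<times> real" and t :: real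
  assumes "0 \<le> t" "t \<le> 1"
  defines "p \<equiv> (fst x + t * (fst w - fst x), snd x + t * (snd w - snd x))"
  shows "linf_dist x p + linf_dist p w = linf_dist x w"
proof -
  have "linf_dist x p = t * linf_dist x w"
    unfolding p_def linf_dist_def using assms(1)
    by (simp add: abs_mult abs_minus_commute max_mult_distrib_left)
  moreover have "linf_dist p w = (1 - t) * linf_dist x w"
  proof -
    have "fst x + t * (fst w - fst x) - fst w = (1 - t) * (fst x - fst w)"
      and "snd x + t * (snd w - snd x) - snd w = (1 - t) * (snd x - snd w)"
      by (simp_all add: algebra_simps)
    then show ?thesis
      unfolding p_def linf_dist_def using assms(2)
      by (simp add: abs_mult max_mult_distrib_left)
  qed
  ultimately show ?thesis
    by (simp add: algebra_simps)
qed

lemma linf_dist_through_line: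
  assumes "- a * fst x \<le> snd x" and "a * fst w + snd w \<le> 0"
  obtains e where "linf_dist x (e, - a * e) + linf_dist (e, - a * e) w = linf_dist x w"
proof -
  define hx where "hx = a * fst x + snd x"
  define hw where "hw = a * fst w + snd w"
  define t where "t = hx / (hx - hw)"
  define p where "p = (fst x + t * (fst w - fst x), snd x + t * (snd w - snd x))"
  have "0 \<le> hx" "hw \<le> 0"
    using assms unfolding hx_def hw_def by simp_all
  then have "0 \<le> t" "t \<le> 1"
    unfolding t_def by (simp_all add: divide_le_eq)
  \<comment> \<open>if \<open>hx = hw\<close> then both vanish, \<open>t = 0\<close> by division by zero, and \<open>x\<close> itself lies on the line\<close>
  have "hx + t * (hw - hx) = 0"
  proof (cases "hx = hw")
    case False
    then show ?thesis
      unfolding t_def by (simp add: field_simps)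
  qed (use \<open>0 \<le> hx\<close> \<open>hw \<le> 0\<close> in simp)
  then have "p = (fst p, - a * fst p)"
    unfolding p_def hx_def hw_def by (simp add: algebra_simps)
  with linf_dist_segment[OF \<open>0 \<le> t\<close> \<open>t \<le> 1\<close>, of x w] show thesis
    using that[of "fst p"] unfolding p_def by simp
qed

lemma glued_pdist_eq_linf_dist_unfolded:
  assumes iso: "\<And>u v. linf_dist (g u) (g v) = linf_dist u v"
    and seam: "\<And>e. g (e, b * e) = (e, - a * e)"
    and side: "a * fst (g y) + snd (g y) \<le> 0"
    and x: "- a * fst x \<le> snd x"
  shows "glued_pdist a b (Inl x) (Inr y) = linf_dist x (g y)"
proof -
  obtain c where c: "linf_dist x (c, - a * c) + linf_dist (c, - a * c) (g y) = linf_dist x (g y)"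
    using linf_dist_through_line[OF x side] .
  have via_seam: "linf_dist (e, - a * e) (g y) = linf_dist (e, b * e) y" for e
    using iso[of "(e, b * e)" y] seam by simp
  show ?thesis
    unfolding glued_pdist_Inl_Inr
  proof (rule cINF_eq_attained[where c = c])
    fix e
    show "linf_dist x (g y) \<le> linf_dist x (e, - a * e) + linf_dist (e, b * e) y"
      using linf_dist_triangle[of x "g y" "(e, - a * e)"] via_seam by simp
  qed (use c via_seam in simp)
qed

text \<open>Then the identity on \<open>H\<^sub>1\<close> together with \<open>g\<close> on \<open>H\<^sub>2\<close> is an isometry of the glued space
  onto the plane.\<close>
lemma hyperconvex_glued_if_isometric_to_plane:
  assumes iso: "\<And>u v. linf_dist (g u) (g v) = linf_dist u v"
    and seam: "\<And>e. g (e, b * e) = (e, - a * e)"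
    and side: "\<And>y. snd y \<le> b * fst y \<Longrightarrow> a * fst (g y) + snd (g y) \<le> 0"
    and onto: "\<And>v. a * fst v + snd v < 0 \<Longrightarrow> \<exists>y. snd y \<le> b * fst y \<and> g y = v"
  shows "hyperconvex (glue_carrier {p. snd p \<ge> - a * fst p} {p. snd p \<le> b * fst p}) (glued_pdist a b)"
proof -
  let ?C = "glue_carrier {p. snd p \<ge> - a * fst p} {p. snd p \<le> b * fst p}"
  have "case_sum id g ` ?C = UNIV"
  proof (intro set_eqI iffI)
    fix v :: "real \<times> real"
    show "v \<in> case_sum id g ` ?C"
    proof (cases "a * fst v + snd v < 0")
      case True
      then obtain y where "snd y \<le> b * fst y" "g y = v"
        using onto by blast
      then show ?thesis
        unfolding glue_carrier_def by (intro image_eqI[of _ _ "Inr y"]) auto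
    qed (auto simp: glue_carrier_def intro!: image_eqI[of _ _ "Inl v"])
  qed auto
  moreover have "glued_pdist a b u v = linf_dist (case_sum id g u) (case_sum id g v)"
    if "u \<in> ?C" "v \<in> ?C" for u v
    using that glued_pdist_eq_linf_dist_unfolded[OF iso seam side]
    by (auto simp: glue_carrier_def iso glued_pdist_Inr_Inl linf_dist_commute)
  ultimately show ?thesis
    using hyperconvex_iff_distance_preserving_surj hyperconvex_linf_plane by blast
qed

lemma hyperconvex_glued_0_0:
  "hyperconvex (glue_carrier {p. snd p \<ge> - 0 * fst p} {p. snd p \<le> 0 * fst p}) (glued_pdist 0 0)"
  by (rule hyperconvex_glued_if_isometric_to_plane[where g = id]) auto

lemma hyperconvex_glued_1_1:
  "hyperconvex (glue_carrier {p. snd p \<ge> - 1 * fst p} {p. snd p \<le> 1 * fst p}) (glued_pdist 1 1)"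
proof (rule hyperconvex_glued_if_isometric_to_plane[where g = "\<lambda>(x, y). (y, - x)"])
  show "linf_dist (case u of (x, y) \<Rightarrow> (y, - x)) (case v of (x, y) \<Rightarrow> (y, - x)) = linf_dist u v"
    for u v :: "real \<times> real"
    by (cases u; cases v) (simp add: linf_dist_def max.commute abs_minus_commute)
  show "\<exists>y. snd y \<le> 1 * fst y \<and> (case y of (x, y) \<Rightarrow> (y, - x)) = v" if "1 * fst v + snd v < 0" for v :: "real \<times> real"
    using that by (intro exI[of _ "(- snd v, fst v)"]) (simp add: prod_eq_iff)
qed auto

text \<open>All three pairwise conditions hold with equality; the configuration is scaled by
  \<open>2 (1 + b)\<close> to keep the radii polynomial.\<close>
lemma glued_three_balls_meet_b_lt_1:
  assumes hc: "hyperconvex (glue_carrier {p. snd p \<ge> - a * fst p} {p. snd p \<le> b * fst p}) (glued_pdist a b)"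
    and a: "0 \<le> a" "a \<le> b" and b: "b < 1"
  defines "c \<equiv> 2 * (1 + b)"
    and "rP \<equiv> 2 + a * b - b\<^sup>2" and "rQ \<equiv> 2 + 2 * b - 2 * a + b\<^sup>2 - a * b"
    and "rS \<equiv> 2 * a + 2 * b + a * b + b\<^sup>2"
  obtains z where "glued_pdist a b (Inl (0, c)) z \<le> rP" "glued_pdist a b (Inr (0, - c)) z \<le> rQ"
    "glued_pdist a b (Inl (c, - a * c)) z \<le> rS"
proof -
  have "0 \<le> a * b" "a * b \<le> b\<^sup>2" "b\<^sup>2 \<le> b"
    using a b by (simp_all add: power2_eq_square mult_right_mono mult_left_le_one_le)
  then have "0 \<le> rP" "0 \<le> rQ" "0 \<le> rS"
    unfolding rP_def rQ_def rS_def using a b by linarith+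
  have "glued_pdist a b (Inl (0, c)) (Inr (0, - c)) \<le>
      linf_dist (0, c) (- 2, - a * - 2) + linf_dist (- 2, b * - 2) (0, - c)"
    by (rule glued_pdist_le)
  also have "\<dots> = rP + rQ"
    unfolding c_def rP_def rQ_def linf_dist_def using a by (simp add: power2_eq_square)
  finally have PQ: "glued_pdist a b (Inl (0, c)) (Inr (0, - c)) \<le> rP + rQ" .
  have PS: "glued_pdist a b (Inl (0, c)) (Inl (c, - a * c)) \<le> rP + rS"
    using a by (simp add: c_def rP_def rS_def linf_dist_def power2_eq_square algebra_simps)
  have "glued_pdist a b (Inl (c, - a * c)) (Inr (0, - c)) = linf_dist (c, b * c) (0, - c)"
    using a b by (intro glued_pdist_seam_Inl_Inr) simp_all
  then have SQ: "glued_pdist a b (Inl (c, - a * c)) (Inr (0, - c)) \<le> rS + rQ"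
    using a b by (simp add: c_def rS_def rQ_def linf_dist_def power2_eq_square algebra_simps)
  show thesis
    by (rule hyperconvexE_three_balls[OF hc, of "Inl (0, c)" "Inr (0, - c)" "Inl (c, - a * c)" rP rQ rS])
      (use that PQ PS SQ \<open>0 \<le> rP\<close> \<open>0 \<le> rQ\<close> \<open>0 \<le> rS\<close> a b in
        \<open>auto simp: glue_carrier_def c_def glued_pdist_commute\<close>)
qed

lemma glued_three_balls_disjoint_b_lt_1:
  assumes a: "0 \<le> a" "a \<le> b" and b: "0 < b" "b < 1"
  defines "c \<equiv> 2 * (1 + b)"
    and "rP \<equiv> 2 + a * b - b\<^sup>2" and "rQ \<equiv> 2 + 2 * b - 2 * a + b\<^sup>2 - a * b"
    and "rS \<equiv> 2 * a + 2 * b + a * b + b\<^sup>2"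
  assumes zP: "glued_pdist a b (Inl (0, c)) z \<le> rP" and zQ: "glued_pdist a b (Inr (0, - c)) z \<le> rQ"
    and zS: "glued_pdist a b (Inl (c, - a * c)) z \<le> rS"
  shows False
proof (cases z)
  case (Inl w)
  have lower: "c - rS \<le> fst w" "c - rP \<le> snd w"
    using zP zS Inl by (auto simp: linf_dist_le_iff abs_le_iff)
  have "(a + b) * fst w + (1 - b) * snd w + (1 + a) * c
      \<le> (1 + a) * glued_pdist a b (Inl w) (Inr (0, - c))"
    using linear_le_glued_pdist[of "a + b" "1 - b" "1 + a" 0 "1 + a" a b w "(0, - c)"] a b
    by (simp add: algebra_simps)
  also have "\<dots> \<le> (1 + a) * rQ"
    using zQ Inl a by (simp add: glued_pdist_commute mult_left_mono)
  finally have "(a + b) * fst w + (1 - b) * snd w + (1 + a) * c \<le> (1 + a) * rQ" .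
  moreover have "(a + b) * (c - rS) + (1 - b) * (c - rP) \<le> (a + b) * fst w + (1 - b) * snd w"
    using lower a b by (intro add_mono mult_left_mono) auto
  moreover have "(a + b) * (c - rS) + (1 - b) * (c - rP) + (1 + a) * c - (1 + a) * rQ
      = 2 * (a + b) * (1 - b) * (2 + b)"
    unfolding c_def rP_def rQ_def rS_def by (simp add: algebra_simps power2_eq_square)
  moreover have "0 < 2 * (a + b) * (1 - b) * (2 + b)"
    using a b by simp
  ultimately show False
    by linarith
next
  case (Inr w)
  have "glued_pdist a b (Inl (c, - a * c)) (Inr w) = linf_dist (c, b * c) w"
    using a b by (intro glued_pdist_seam_Inl_Inr) simp_all
  then have bounds: "c - rS \<le> fst w" "snd w \<le> rQ - c"
    using zQ zS Inr by (auto simp: linf_dist_le_iff abs_le_iff)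
  have "(1 + b) * c + (a + b) * fst w - (1 - a) * snd w
      \<le> (1 + b) * glued_pdist a b (Inl (0, c)) (Inr w)"
    using linear_le_glued_pdist[of 0 "1 + b" "1 + b" "- (a + b)" "1 - a" a b "(0, c)" w] a b
    by (simp add: algebra_simps)
  also have "\<dots> \<le> (1 + b) * rP"
    using zP Inr b by (simp add: mult_left_mono)
  finally have "(1 + b) * c + (a + b) * fst w - (1 - a) * snd w \<le> (1 + b) * rP" .
  moreover have "(a + b) * (c - rS) - (1 - a) * (rQ - c) \<le> (a + b) * fst w - (1 - a) * snd w"
    using bounds a b by (intro diff_mono mult_left_mono) auto
  moreover have "(1 + b) * c + (a + b) * (c - rS) - (1 - a) * (rQ - c) - (1 + b) * rP
      = 2 * (a + b) * (2 + b) * (1 - a)"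
    unfolding c_def rP_def rQ_def rS_def by (simp add: algebra_simps power2_eq_square)
  moreover have "0 < 2 * (a + b) * (2 + b) * (1 - a)"
    using a b by simp
  ultimately show False
    by linarith
qed

lemma not_hyperconvex_glued_if_b_lt_1:
  assumes "0 \<le> a" "a \<le> b" "0 < b" "b < 1"
  shows "\<not> hyperconvex (glue_carrier {p. snd p \<ge> - a * fst p} {p. snd p \<le> b * fst p}) (glued_pdist a b)"
proof
  assume "hyperconvex (glue_carrier {p. snd p \<ge> - a * fst p} {p. snd p \<le> b * fst p}) (glued_pdist a b)"
  then obtain z where "glued_pdist a b (Inl (0, 2 * (1 + b))) z \<le> 2 + a * b - b\<^sup>2"
    "glued_pdist a b (Inr (0, - (2 * (1 + b)))) z \<le> 2 + 2 * b - 2 * a + b\<^sup>2 - a * b"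
    "glued_pdist a b (Inl (2 * (1 + b), - a * (2 * (1 + b)))) z \<le> 2 * a + 2 * b + a * b + b\<^sup>2"
    using assms(1,2,4) by (rule glued_three_balls_meet_b_lt_1)
  then show False
    by (rule glued_three_balls_disjoint_b_lt_1[OF assms])
qed

lemma glued_three_balls_meet_b_eq_1:
  assumes hc: "hyperconvex (glue_carrier {p. snd p \<ge> - a * fst p} {p. snd p \<le> 1 * fst p}) (glued_pdist a 1)"
    and a: "0 \<le> a" "a < 1"
  obtains z where "glued_pdist a 1 (Inr (2, 0)) z \<le> 2 + 2 * a" "glued_pdist a 1 (Inl (- 2, 4)) z \<le> 3 - a"
    "glued_pdist a 1 (Inr (- 2, - 4)) z \<le> 2 - 2 * a"
proof -
  have "glued_pdist a 1 (Inl (- 2, 4)) (Inr (2, 0)) \<le>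
      linf_dist (- 2, 4) (1, - a * 1) + linf_dist (1, 1 * 1) (2, 0)"
    by (rule glued_pdist_le)
  moreover have "linf_dist (- 2, 4) (1, - a * 1) + linf_dist (1, 1 * 1) (2, 0 :: real) = (3 - a) + (2 + 2 * a)"
    using a by (simp add: linf_dist_def)
  moreover have "glued_pdist a 1 (Inl (- 2, 4)) (Inr (- 2, - 4)) \<le>
      linf_dist (- 2, 4) (- 3, - a * - 3) + linf_dist (- 3, 1 * - 3) (- 2, - 4)"
    by (rule glued_pdist_le)
  moreover have "linf_dist (- 2, 4) (- 3, - a * - 3) + linf_dist (- 3, 1 * - 3) (- 2, - 4 :: real) = (3 - a) + (2 - 2 * a)"
    using a by (simp add: linf_dist_def)
  ultimately show thesis
    using hyperconvexE_three_balls[OF hc, of "Inr (2, 0)" "Inl (- 2, 4)" "Inr (- 2, - 4)" "2 + 2 * a" "3 - a" "2 - 2 * a"] that a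
    by (auto simp: glue_carrier_def glued_pdist_commute linf_dist_def)
qed

lemma glued_three_balls_disjoint_b_eq_1:
  assumes a: "0 \<le> a" "a < 1"
    and z1: "glued_pdist a 1 (Inr (2, 0)) z \<le> 2 + 2 * a" and z2: "glued_pdist a 1 (Inl (- 2, 4)) z \<le> 3 - a"
    and z3: "glued_pdist a 1 (Inr (- 2, - 4)) z \<le> 2 - 2 * a"
  shows False
proof (cases z)
  case (Inl w)
  have "2 - fst w \<le> 2 + 2 * a"
    using linear_le_glued_pdist[of "- 1" 0 1 "- 1" 0 a 1 w "(2, 0)"] z1 Inl
    by (simp add: glued_pdist_commute)
  moreover have "fst w + 4 \<le> 2 - 2 * a"
    using linear_le_glued_pdist[of 1 0 1 0 1 a 1 w "(- 2, - 4)"] z3 Inl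
    by (simp add: glued_pdist_commute)
  ultimately show False
    using a by linarith
next
  case (Inr w)
  have bounds: "- 2 * a \<le> fst w" "snd w \<le> - 2 - 2 * a"
    using z1 z3 Inr by (auto simp: linf_dist_le_iff abs_le_iff)
  have "8 + (1 + a) * fst w - (1 - a) * snd w \<le> 2 * (3 - a)"
    using linear_le_glued_pdist[of 0 2 2 "- (1 + a)" "1 - a" a 1 "(- 2, 4)" w] z2 Inr a
    by (simp add: algebra_simps)
  moreover have "(1 + a) * (- 2 * a) - (1 - a) * (- 2 - 2 * a) \<le> (1 + a) * fst w - (1 - a) * snd w"
    using bounds a by (intro diff_mono mult_left_mono) auto
  moreover have "(1 + a) * (- 2 * a) - (1 - a) * (- 2 - 2 * a) = 2 - 2 * a - 4 * (a * a)"
    by (simp add: algebra_simps)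
  moreover have "a * a \<le> a"
    using a by (simp add: mult_left_le_one_le)
  ultimately show False
    using a by (smt (verit))
qed

lemma not_hyperconvex_glued_if_b_eq_1:
  assumes "0 \<le> a" "a < 1"
  shows "\<not> hyperconvex (glue_carrier {p. snd p \<ge> - a * fst p} {p. snd p \<le> 1 * fst p}) (glued_pdist a 1)"
  using glued_three_balls_meet_b_eq_1 glued_three_balls_disjoint_b_eq_1 assms by blast

lemma hyperconvex_glued_half_planes_iff:
  assumes "0 \<le> a" "a \<le> b" "b \<le> 1"
  shows "hyperconvex (glue_carrier {p. snd p \<ge> - a * fst p} {p. snd p \<le> b * fst p}) (glued_pdist a b)
    \<longleftrightarrow> (a = 0 \<and> b = 0) \<or> (a = 1 \<and> b = 1)"
proof
  assume "hyperconvex (glue_carrier {p. snd p \<ge> - a * fst p} {p. snd p \<le> b * fst p}) (glued_pdist a b)"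
  moreover have "b = 0 \<or> 0 < b \<and> b < 1 \<or> b = 1 \<and> a < 1 \<or> a = 1 \<and> b = 1"
    using assms by linarith
  ultimately show "(a = 0 \<and> b = 0) \<or> (a = 1 \<and> b = 1)"
    using assms not_hyperconvex_glued_if_b_lt_1 not_hyperconvex_glued_if_b_eq_1 by force
qed (use hyperconvex_glued_0_0 hyperconvex_glued_1_1 in auto)

theorem mainTheorem18:
  fixes a b :: real
  assumes "0 \<le> a" "a \<le> b" "b \<le> 1"
  shows "hyperconvex
           (glue_space {p. snd p \<ge> - a * fst p} {p. snd p \<le> b * fst p} (UNIV :: real set)
              (\<lambda>\<xi>. (\<xi>, - a * \<xi>)) (\<lambda>\<xi>. (\<xi>, b * \<xi>)))
           (glue_dist linf_dist linf_dist (UNIV :: real set)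
              (\<lambda>\<xi>. (\<xi>, - a * \<xi>)) (\<lambda>\<xi>. (\<xi>, b * \<xi>)))
         \<longleftrightarrow> (a = 0 \<and> b = 0) \<or> (a = 1 \<and> b = 1)"
proof -
  have ab: "\<bar>a\<bar> \<le> 1" "\<bar>b\<bar> \<le> 1"
    using assms by auto
  have "hyperconvex
           (glue_space {p. snd p \<ge> - a * fst p} {p. snd p \<le> b * fst p} (UNIV :: real set)
              (\<lambda>\<xi>. (\<xi>, - a * \<xi>)) (\<lambda>\<xi>. (\<xi>, b * \<xi>)))
           (glue_dist linf_dist linf_dist (UNIV :: real set)
              (\<lambda>\<xi>. (\<xi>, - a * \<xi>)) (\<lambda>\<xi>. (\<xi>, b * \<xi>)))
      \<longleftrightarrow> hyperconvex (glue_carrier {p. snd p \<ge> - a * fst p} {p. snd p \<le> b * fst p}) (glued_pdist a b)"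
    unfolding glued_pdist_def
    by (intro hyperconvex_glue_space_iff)
      (use glued_pdist_commute glued_pdist_respects_glue_rel[OF ab] in \<open>simp_all add: glued_pdist_def\<close>)
  also have "\<dots> \<longleftrightarrow> (a = 0 \<and> b = 0) \<or> (a = 1 \<and> b = 1)"
    by (rule hyperconvex_glued_half_planes_iff[OF assms])
  finally show ?thesis .
qed

end
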